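(* Let $\phi:v_{\mathcal{C},j}\mapsto y^{n_{\mathcal{C},j}}$ be a cyclotomic specialization and let $\chi,\psi\in\mathrm{Irr}(W)$ with sets of factor degrees $\mathcal{F}_\chi,\mathcal{F}_\psi$ (with respect to fixed factorizations of their generic Schur elements). If $a_{\chi,\epsilon}(\mathbf{t})=a_{\psi,\epsilon}(\mathbf{t})$ (resp. $A_{\chi,\epsilon}(\mathbf{t})=A_{\psi,\epsilon}(\mathbf{t})$) as polynomials in $\mathbf{t}$ for every good sign map $\epsilon$ for $\mathcal{F}_\chi\cup\mathcal{F}_\psi$, then $a_{\chi_\phi}=a_{\psi_\phi}$ (resp. $A_{\chi_\phi}=A_{\psi_\phi}$).
   Context: Setting: $K\subset\mathbb{Q}(\mu_\infty)$ a number field with ring of integers $\mathbb{Z}_K$; $W$ a finite irreducible complex reflection group defined over $K$, reflecting-hyperplane orbits $\mathcal{C}$ with stabilizer orders $e_{\mathcal{C}}$; $\mathcal{H}$ its generic Hecke algebra (assumed free of rank $|W|$ with canonical symmetrizing form), over $\mathbb{Z}_K[\mathbf{v},\mathbf{v}^{-1}]$ with indeterminates $v_{\mathcal{C},j}$, $0\le j\le e_{\mathcal{C}}-1$ (Hecke parameters $u_{\mathcal{C},j}=\zeta_{e_{\mathcal{C}}}^jv_{\mathcal{C},j}^{|\mu(K)|}$). For $\chi\in\mathrm{Irr}(W)$, the generic Schur element is fixed in the factorized form $(\dagger)\ s_\chi(\mathbf{v})=\xi_\chi N_\chi\prod_{i\in I_\chi}\Psi_{\chi,i}(M_{\chi,i})^{n_{\chi,i}}$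 with $\xi_\chi\in\mathbb{Z}_K$, $N_\chi=\prod v_{\mathcal{C},j}^{b_{\mathcal{C},j}}$ ($\sum_jb_{\mathcal{C},j}=0$ for all $\mathcal{C}$), $\Psi_{\chi,i}$ $K$-cyclotomic polynomials in one variable, $M_{\chi,i}=\prod v_{\mathcal{C},j}^{a_{\mathcal{C},j}}$ monomials with $\gcd(a_{\mathcal{C},j})=1$ and $\sum_ja_{\mathcal{C},j}=0$ for all $\mathcal{C}$, $n_{\chi,i}$ positive integers. Factor degrees: let $\mathbf{t}=(t_{\mathcal{C},j})$ be indeterminates. For a factor $\Psi(M)$ of $(\dagger)$ with $M=\prod v_{\mathcal{C},j}^{a_{\mathcal{C},j}}$, its factor degree is $f_{\Psi(M)}(\mathbf{t})=\deg(\Psi)\sum_{\mathcal{C},j}a_{\mathcal{C},j}t_{\mathcal{C},j}$, and its coefficient $\mathbf{c}(f_{\Psi(M)})$ is the largest $n$ such that $\Psi(M)^n$ appears in $(\dagger)$. $\mathcal{F}_\chi$ is the set of factor degrees for $\chi$. Two factor degrees satisfy $f_1\sim f_2$ if $f_1=qf_2$ for some rational $q>0$. A good sign map for a set $\mathcal{F}$ of factor degrees is a map $\epsilon:\mathcal{F}\to\{-1,1\}$ with $\epsilon(f_1)=\epsilon(f_2)$ whenever $f_1\sim f_2$ and $\epsilon(f_1)=-\epsilon(f_2)$ whenever $f_1\sim -f_2$. For a good sign map $\epsilon$ (restricted to $\mathcal{F}_\chi$), the generic valuation and generic degree are $a_{\chi,\epsilon}(\mathbf{t})=\sum_{\mathcal{C},j}b_{\mathcal{C},j}t_{\mathcal{C},j}+\sum_{f\in\mathcal{F}_\chi,\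 \epsilon(f)=-1}\mathbf{c}(f)f$, and $A_{\chi,\epsilon}(\mathbf{t})=\sum_{\mathcal{C},j}b_{\mathcal{C},j}t_{\mathcal{C},j}+\sum_{f\in\mathcal{F}_\chi,\ \epsilon(f)=1}\mathbf{c}(f)f$. A cyclotomic specialization is a $\mathbb{Z}_K$-algebra morphism $\phi:v_{\mathcal{C},j}\mapsto y^{n_{\mathcal{C},j}}$ ($n_{\mathcal{C},j}\in\mathbb{Z}$) into $\mathbb{Z}_K[y,y^{-1}]$ such that each $\prod_j(z-\zeta_{e_{\mathcal{C}}}^jy^{n_{\mathcal{C},j}})$ is invariant under $\mathrm{Gal}(K(y)/K(y^{|\mu(K)|}))$; $\chi_\phi$ is the corresponding character of the specialized algebra, with Schur element $s_{\chi_\phi}(y)=\phi(s_\chi(\mathbf{v}))$, $a_{\chi_\phi}$ its valuation (order at $y=0$) and $A_{\chi_\phi}$ its degree ($-$order at $0$ of $s_{\chi_\phi}(1/y)$). *)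

theory Defs
  imports "HOL-Computational_Algebra.Computational_Algebra" "HOL-Library.Multiset" Complex_Main
begin

definition subfield_C :: "complex set \<Rightarrow> bool" where
  "subfield_C K \<longleftrightarrow> 0 \<in> K \<and> 1 \<in> K \<and>
     (\<forall>x\<in>K. \<forall>y\<in>K. x + y \<in> K \<and> x - y \<in> K \<and> x * y \<in> K) \<and>
     (\<forall>x\<in>K. x \<noteq> 0 \<longrightarrow> inverse x \<in> K)"

definition root_unity :: "nat \<Rightarrow> complex" where
  "root_unity d = cis (2 * pi / real d)"

definition cyc_field :: "nat \<Rightarrow> complex set" where
  "cyc_field d = {poly (map_poly of_rat p) (root_unity d) | p :: rat poly. True}"

text \<open>K is a number field contained in Q(mu_infinity): a subfield of some Q(zeta_d).\<close>
definition cyclotomic_number_field :: "complex set \<Rightarrow> bool" where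
  "cyclotomic_number_field K \<longleftrightarrow> subfield_C K \<and> (\<exists>d>0. K \<subseteq> cyc_field d)"

definition roots_of_unity_in :: "complex set \<Rightarrow> complex set" where
  "roots_of_unity_in K = {z \<in> K. \<exists>n>0. z ^ n = 1}"

definition ring_of_integers :: "complex set \<Rightarrow> complex set" where
  "ring_of_integers K = {x \<in> K. algebraic_int x}"

definition coeffs_in :: "complex set \<Rightarrow> complex poly \<Rightarrow> bool" where
  "coeffs_in K p \<longleftrightarrow> (\<forall>i. coeff p i \<in> K)"

text \<open>K-cyclotomic polynomial: a monic polynomial over K, irreducible over K,
  dividing x^d - 1 for some d > 0 (i.e. an irreducible K-factor of some Phi_d).\<close>
definition K_cyclotomic :: "complex set \<Rightarrow> complex poly \<Rightarrow> bool" where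
  "K_cyclotomic K P \<longleftrightarrow> coeffs_in K P \<and> lead_coeff P = 1 \<and> degree P > 0 \<and>
     (\<forall>p q. coeffs_in K p \<longrightarrow> coeffs_in K q \<longrightarrow> P = p * q \<longrightarrow> degree p = 0 \<or> degree q = 0) \<and>
     (\<exists>d>0. P dvd (monom 1 d - 1))"

text \<open>Variables v_{C,j} are indexed by pairs (C,j) with C in the set of hyperplane
  orbits Cs and j < e C. Exponent vectors are functions on such pairs.\<close>
definition var_set :: "'c set \<Rightarrow> ('c \<Rightarrow> nat) \<Rightarrow> ('c \<times> nat) set" where
  "var_set Cs e = {(C, j). C \<in> Cs \<and> j < e C}"

text \<open>A factorized form (dagger): constant xi, exponent vector b of N, and a list of
  factors (Psi_i, a_i, n_i) standing for Psi_i(M_i)^{n_i} with M_i = prod v^{a_i}.\<close>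
type_synonym 'c factorization =
  "complex \<times> ('c \<times> nat \<Rightarrow> int) \<times> (complex poly \<times> ('c \<times> nat \<Rightarrow> int) \<times> nat) list"

definition zero_sum_on_orbits :: "'c set \<Rightarrow> ('c \<Rightarrow> nat) \<Rightarrow> ('c \<times> nat \<Rightarrow> int) \<Rightarrow> bool" where
  "zero_sum_on_orbits Cs e a \<longleftrightarrow> (\<forall>C\<in>Cs. (\<Sum>j<e C. a (C, j)) = 0)"

definition valid_factorization ::
  "complex set \<Rightarrow> 'c set \<Rightarrow> ('c \<Rightarrow> nat) \<Rightarrow> 'c factorization \<Rightarrow> bool" where
  "valid_factorization K Cs e F \<longleftrightarrow>
     (case F of (\<xi>, b, fs) \<Rightarrow>
        \<xi> \<in> ring_of_integers K \<and>
        zero_sum_on_orbits Cs e b \<and> (\<forall>v. v \<notin> var_set Cs e \<longrightarrow> b v = 0) \<and>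
        (\<forall>(P, a, n) \<in> set fs.
           K_cyclotomic K P \<and> n > 0 \<and>
           zero_sum_on_orbits Cs e a \<and> (\<forall>v. v \<notin> var_set Cs e \<longrightarrow> a v = 0) \<and>
           Gcd (a ` var_set Cs e) = 1))"

text \<open>A linear form sum_{C,j} c_{C,j} t_{C,j} is represented by its coefficient function
  (zero outside the variable set); equality of such functions is equality as polynomials.\<close>
type_synonym 'c linform = "'c \<times> nat \<Rightarrow> rat"

definition factor_degree :: "complex poly \<Rightarrow> ('c \<times> nat \<Rightarrow> int) \<Rightarrow> 'c linform" where
  "factor_degree P a = (\<lambda>v. of_nat (degree P) * of_int (a v))"

definition factor_degrees :: "'c factorization \<Rightarrow> 'c linform set" where
  "factor_degrees F = (\<lambda>(P, a, n). factor_degree P a) ` set (snd (snd F))"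

definition fd_coeff :: "'c factorization \<Rightarrow> 'c linform \<Rightarrow> nat" where
  "fd_coeff F f = sum_list (map (\<lambda>(P, a, n). if factor_degree P a = f then n else 0) (snd (snd F)))"

definition fd_equiv :: "'c linform \<Rightarrow> 'c linform \<Rightarrow> bool" where
  "fd_equiv f1 f2 \<longleftrightarrow> (\<exists>q::rat. q > 0 \<and> f1 = (\<lambda>v. q * f2 v))"

definition good_sign_map :: "'c linform set \<Rightarrow> ('c linform \<Rightarrow> int) \<Rightarrow> bool" where
  "good_sign_map FS \<epsilon> \<longleftrightarrow>
     (\<forall>f\<in>FS. \<epsilon> f \<in> {-1, 1}) \<and>
     (\<forall>f1\<in>FS. \<forall>f2\<in>FS. fd_equiv f1 f2 \<longrightarrow> \<epsilon> f1 = \<epsilon> f2) \<and>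
     (\<forall>f1\<in>FS. \<forall>f2\<in>FS. fd_equiv f1 (\<lambda>v. - f2 v) \<longrightarrow> \<epsilon> f1 = - \<epsilon> f2)"

definition generic_valuation :: "'c factorization \<Rightarrow> ('c linform \<Rightarrow> int) \<Rightarrow> 'c linform" where
  "generic_valuation F \<epsilon> = (\<lambda>v. of_int (fst (snd F) v) +
      (\<Sum>f\<in>{f \<in> factor_degrees F. \<epsilon> f = -1}. of_nat (fd_coeff F f) * f v))"

definition generic_degree :: "'c factorization \<Rightarrow> ('c linform \<Rightarrow> int) \<Rightarrow> 'c linform" where
  "generic_degree F \<epsilon> = (\<lambda>v. of_int (fst (snd F) v) +
      (\<Sum>f\<in>{f \<in> factor_degrees F. \<epsilon> f = 1}. of_nat (fd_coeff F f) * f v))"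

text \<open>For each orbit C, the polynomial prod_j (z - zeta_e^j y^{n_{C,j}}) is invariant under
  Gal(K(y)/K(y^{|mu(K)|})), whose elements are y \<mapsto> zeta*y for zeta in mu(K); equivalently
  the multiset of its roots zeta_e^j y^{n_{C,j}} (encoded as (coefficient, exponent)) is invariant.\<close>
definition cyclotomic_specialization ::
  "complex set \<Rightarrow> 'c set \<Rightarrow> ('c \<Rightarrow> nat) \<Rightarrow> ('c \<times> nat \<Rightarrow> int) \<Rightarrow> bool" where
  "cyclotomic_specialization K Cs e m \<longleftrightarrow>
     (\<forall>C\<in>Cs. \<forall>\<zeta>\<in>roots_of_unity_in K.
        image_mset (\<lambda>j. (root_unity (e C) ^ j, m (C, j))) (mset_set {..<e C}) =
        image_mset (\<lambda>j. (root_unity (e C) ^ j * \<zeta> powi m (C, j), m (C, j))) (mset_set {..<e C}))"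

definition lmono :: "int \<Rightarrow> complex fls" where
  "lmono k = fls_X_intpow k"

definition poly_at_mono :: "complex poly \<Rightarrow> int \<Rightarrow> complex fls" where
  "poly_at_mono P k = poly (map_poly fls_const P) (lmono k)"

definition pair_exp :: "('c \<times> nat) set \<Rightarrow> ('c \<times> nat \<Rightarrow> int) \<Rightarrow> ('c \<times> nat \<Rightarrow> int) \<Rightarrow> int" where
  "pair_exp V a m = (\<Sum>v\<in>V. a v * m v)"

text \<open>The specialized Schur element phi(s_chi)(y) in Z_K[y,y^-1], phi: v_{C,j} \<mapsto> y^{m(C,j)}.\<close>
definition specialized_schur ::
  "'c set \<Rightarrow> ('c \<Rightarrow> nat) \<Rightarrow> ('c \<times> nat \<Rightarrow> int) \<Rightarrow> 'c factorization \<Rightarrow> complex fls" where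
  "specialized_schur Cs e m F =
     (case F of (\<xi>, b, fs) \<Rightarrow>
        fls_const \<xi> * lmono (pair_exp (var_set Cs e) b m) *
        prod_list (map (\<lambda>(P, a, n). poly_at_mono P (pair_exp (var_set Cs e) a m) ^ n) fs))"

definition spec_valuation ::
  "'c set \<Rightarrow> ('c \<Rightarrow> nat) \<Rightarrow> ('c \<times> nat \<Rightarrow> int) \<Rightarrow> 'c factorization \<Rightarrow> int" where
  "spec_valuation Cs e m F = fls_subdegree (specialized_schur Cs e m F)"

text \<open>Degree A_{chi_phi}: minus the order at 0 of s(1/y); s(1/y) is the specialization
  at the negated exponents.\<close>
definition spec_degree ::
  "'c set \<Rightarrow> ('c \<Rightarrow> nat) \<Rightarrow> ('c \<times> nat \<Rightarrow> int) \<Rightarrow> 'c factorization \<Rightarrow> int" where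
  "spec_degree Cs e m F = - fls_subdegree (specialized_schur Cs e (\<lambda>v. - m v) F)"

end

theory Submission
  imports Defs
begin

text \<open>Since a K-cyclotomic polynomial \<Psi> has \<Psi>(0) \<noteq> 0, the specialized factor \<Psi>(y^k)
  has valuation min 0 (deg \<Psi> \<cdot> k), and k is the value of the factor degree at the
  specialization exponents. So the valuation of the specialized Schur element is the
  value of the generic valuation a_{\<chi>,\<epsilon>} for any sign map \<epsilon> that agrees with the sign of
  every factor degree not vanishing at the exponents. Such an \<epsilon> can be chosen good for
  the factor degrees of \<chi> and \<psi> simultaneously, by breaking ties lexicographically;
  for it the hypothesis identifies the two valuations. The degree is the valuation at
  the negated exponents, and negating \<epsilon> turns a_{\<chi>,\<epsilon>} into A_{\<chi>,\<epsilon>}.\<close>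

lemma fls_nth_poly_at_mono:
  "fls_nth (poly_at_mono P k) j = (\<Sum>i\<le>degree P. if int i * k = j then coeff P i else 0)"
proof -
  have "degree (map_poly fls_const P) = degree P"
    by (rule degree_map_poly) (simp add: fls_const_nonzero)
  then have "poly_at_mono P k = (\<Sum>i\<le>degree P. fls_const (coeff P i) * fls_X_intpow (int i * k))"
    unfolding poly_at_mono_def lmono_def poly_altdef
    by (simp add: coeff_map_poly fls_X_intpow_power)
  then show ?thesis
    by (auto simp: fls_nth_sum intro!: sum.cong)
qed

lemma fls_nth_poly_at_mono_degree:
  "k \<noteq> 0 \<Longrightarrow> fls_nth (poly_at_mono P k) (int (degree P) * k) = lead_coeff P"
  unfolding fls_nth_poly_at_mono
  by (subst sum.cong[OF refl, where h = "\<lambda>i. if i = degree P then coeff P i else 0"]) auto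

lemma fls_nth_poly_at_mono_0:
  "0 < k \<Longrightarrow> fls_nth (poly_at_mono P k) 0 = coeff P 0"
  unfolding fls_nth_poly_at_mono
  by (subst sum.cong[OF refl, where h = "\<lambda>i. if i = 0 then coeff P i else 0"]) auto

lemma poly_at_mono_nonzero: "k \<noteq> 0 \<Longrightarrow> P \<noteq> 0 \<Longrightarrow> poly_at_mono P k \<noteq> 0"
  using fls_nth_poly_at_mono_degree[of k P] by auto

lemma fls_subdegree_poly_at_mono:
  assumes "coeff P 0 \<noteq> 0"
  shows "fls_subdegree (poly_at_mono P k) = min 0 (int (degree P) * k)"
proof -
  have vanish: "fls_nth (poly_at_mono P k) j = 0"
    if "\<And>i. i \<le> degree P \<Longrightarrow> int i * k \<noteq> j" for j
    unfolding fls_nth_poly_at_mono using that by (intro sum.neutral) auto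
  consider "k = 0" | "k > 0" | "k < 0" by linarith
  then show ?thesis
  proof cases
    case 1
    then have "fls_nth (poly_at_mono P k) j = 0" if "j \<noteq> 0" for j
      using that by (intro vanish) simp
    then have "poly_at_mono P k = fls_const (fls_nth (poly_at_mono P k) 0)"
      by (intro fls_eqI) auto
    then show ?thesis using 1 by (metis fls_const_subdegree min.idem mult_zero_right)
  next
    case 2
    then have "fls_subdegree (poly_at_mono P k) = 0"
      using assms by (intro fls_subdegree_eqI)
        (auto simp: fls_nth_poly_at_mono_0 mult_less_0_iff intro!: vanish)
    then show ?thesis using 2 by (simp add: min_def)
  next
    case 3
    have "int (degree P) * k \<le> int i * k" if "i \<le> degree P" for i
      using 3 that by (intro mult_right_mono_neg) auto
    then have "fls_subdegree (poly_at_mono P k) = int (degree P) * k"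
      using 3 assms by (intro fls_subdegree_eqI)
        (auto simp: fls_nth_poly_at_mono_degree intro!: vanish dest: leD)
    then show ?thesis using 3 by (simp add: mult_nonneg_nonpos)
  qed
qed

lemma poly_at_mono_uminus_nonzero:
  "P \<noteq> 0 \<Longrightarrow> poly_at_mono P k \<noteq> 0 \<Longrightarrow> poly_at_mono P (- k) \<noteq> 0"
  by (cases "k = 0") (simp_all add: poly_at_mono_nonzero)

lemma K_cyclotomic_nonzero: "K_cyclotomic K P \<Longrightarrow> P \<noteq> 0"
  unfolding K_cyclotomic_def by auto

lemma K_cyclotomic_coeff_0_nonzero:
  assumes "K_cyclotomic K P"
  shows "coeff P 0 \<noteq> 0"
proof -
  from assms obtain d where "d > 0" "P dvd (monom 1 d - 1)"
    unfolding K_cyclotomic_def by auto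
  then obtain Q where "monom 1 d - 1 = P * Q" by (auto elim: dvdE)
  moreover have "coeff (monom (1::complex) d - 1) 0 = -1" using \<open>d > 0\<close> by simp
  ultimately have "coeff P 0 * coeff Q 0 = -1" by (metis coeff_mult_0)
  then show ?thesis by auto
qed

lemma fls_subdegree_prod_list:
  fixes xs :: "'a::semiring_1_no_zero_divisors fls list"
  shows "0 \<notin> set xs \<Longrightarrow> fls_subdegree (prod_list xs) = sum_list (map fls_subdegree xs)"
  by (induction xs) (auto simp: prod_list_zero_iff)

lemma pair_exp_uminus: "pair_exp V a (\<lambda>v. - m v) = - pair_exp V a m"
  unfolding pair_exp_def by (simp add: sum_negf)

lemma valid_factorization_factor:
  assumes "valid_factorization K Cs e (\<xi>, b, fs)" "(P, a, n) \<in> set fs"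
  shows "K_cyclotomic K P" "0 < n"
  using assms unfolding valid_factorization_def by auto

lemma fls_subdegree_specialized_schur:
  assumes F: "valid_factorization K Cs e (\<xi>, b, fs)"
    and nz: "specialized_schur Cs e m (\<xi>, b, fs) \<noteq> 0"
  defines "V \<equiv> var_set Cs e"
  shows "fls_subdegree (specialized_schur Cs e m (\<xi>, b, fs)) = pair_exp V b m
     + sum_list (map (\<lambda>(P, a, n). int n * min 0 (int (degree P) * pair_exp V a m)) fs)"
proof -
  define xs where "xs = map (\<lambda>(P, a, n). poly_at_mono P (pair_exp V a m) ^ n) fs"
  have schur: "specialized_schur Cs e m (\<xi>, b, fs)
      = fls_const \<xi> * lmono (pair_exp V b m) * prod_list xs"
    unfolding specialized_schur_def xs_def V_def by simp
  from nz have "\<xi> \<noteq> 0" and "prod_list xs \<noteq> 0" unfolding schur by auto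
  then have xs: "0 \<notin> set xs" by (simp add: prod_list_zero_iff)
  have "fls_subdegree (poly_at_mono P (pair_exp V a m) ^ n)
      = int n * min 0 (int (degree P) * pair_exp V a m)" if "(P, a, n) \<in> set fs" for P a n
    using valid_factorization_factor(1)[OF F that]
    by (simp add: fls_subdegree_pow fls_subdegree_poly_at_mono K_cyclotomic_coeff_0_nonzero)
  then have "map fls_subdegree xs
      = map (\<lambda>(P, a, n). int n * min 0 (int (degree P) * pair_exp V a m)) fs" unfolding xs_def by auto
  then show ?thesis
    using \<open>\<xi> \<noteq> 0\<close> \<open>prod_list xs \<noteq> 0\<close> xs
    by (simp add: schur lmono_def fls_const_nonzero fls_subdegree_prod_list)
qed

lemma specialized_schur_uminus_nonzero:
  assumes F: "valid_factorization K Cs e (\<xi>, b, fs)"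
    and nz: "specialized_schur Cs e m (\<xi>, b, fs) \<noteq> 0"
  shows "specialized_schur Cs e (\<lambda>v. - m v) (\<xi>, b, fs) \<noteq> 0"
proof -
  define V where "V = var_set Cs e"
  have "poly_at_mono P (pair_exp V a (\<lambda>v. - m v)) ^ n \<noteq> 0" if "(P, a, n) \<in> set fs" for P a n
  proof -
    have "P \<noteq> 0" and "n > 0"
      using valid_factorization_factor[OF F that] K_cyclotomic_nonzero by blast+
    moreover have "poly_at_mono P (pair_exp V a m) \<noteq> 0"
      using nz that \<open>n > 0\<close> by (force simp: specialized_schur_def V_def prod_list_zero_iff)
    ultimately show ?thesis by (simp add: pair_exp_uminus poly_at_mono_uminus_nonzero)
  qed
  then have "prod_list (map (\<lambda>(P, a, n). poly_at_mono P (pair_exp V a (\<lambda>v. - m v)) ^ n) fs) \<noteq> 0"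
    by (fastforce simp: prod_list_zero_iff)
  with nz show ?thesis
    by (simp add: specialized_schur_def V_def lmono_def)
qed

lemma find_map: "find P (map f xs) = map_option f (find (P \<circ> f) xs)"
  by (induction xs) auto

definition first_nonzero_sign :: "rat list \<Rightarrow> int" where
  "first_nonzero_sign xs =
     (case find (\<lambda>x. x \<noteq> 0) xs of Some x \<Rightarrow> if x < 0 then -1 else 1 | None \<Rightarrow> 0)"

lemma first_nonzero_sign_scale:
  "of_int (first_nonzero_sign (map ((*) q) xs)) = sgn q * of_int (first_nonzero_sign xs)"
proof (cases "q = 0")
  case True
  then have "find (\<lambda>x. x \<noteq> 0) (map ((*) q) xs) = None" by (simp add: find_None_iff)
  then show ?thesis using True by (simp add: first_nonzero_sign_def)
next
  case False
  then have shift: "find (\<lambda>x. x \<noteq> 0) (map ((*) q) xs)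
      = map_option ((*) q) (find (\<lambda>x. x \<noteq> 0) xs)"
    by (simp add: find_map comp_def)
  show ?thesis
  proof (cases "find (\<lambda>x. x \<noteq> 0) xs")
    case None
    then show ?thesis by (simp add: first_nonzero_sign_def shift)
  next
    case (Some x)
    then have "x \<noteq> 0" by (auto simp: find_Some_iff)
    then show ?thesis
      using False Some by (auto simp: first_nonzero_sign_def shift sgn_if mult_less_0_iff)
  qed
qed

lemma first_nonzero_sign_Cons: "x \<noteq> 0 \<Longrightarrow> of_int (first_nonzero_sign (x # xs)) = sgn x"
  by (simp add: first_nonzero_sign_def sgn_if)

lemma first_nonzero_sign_in: "\<exists>x\<in>set xs. x \<noteq> 0 \<Longrightarrow> first_nonzero_sign xs \<in> {-1, 1}"
  by (auto simp: first_nonzero_sign_def find_None_iff split: option.split)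

definition eval_linform :: "('c \<times> nat) set \<Rightarrow> ('c \<times> nat \<Rightarrow> int) \<Rightarrow> 'c linform \<Rightarrow> rat" where
  "eval_linform V m f = (\<Sum>v\<in>V. f v * of_int (m v))"

lemma eval_linform_scale: "eval_linform V m (\<lambda>v. q * f v) = q * eval_linform V m f"
  unfolding eval_linform_def by (simp add: sum_distrib_left mult.assoc)

lemma eval_linform_uminus_point: "eval_linform V (\<lambda>v. - m v) f = - eval_linform V m f"
  unfolding eval_linform_def by (simp add: sum_negf)

lemma eval_linform_factor_degree:
  "eval_linform V m (factor_degree P a) = of_nat (degree P) * of_int (pair_exp V a m)"
  unfolding eval_linform_def factor_degree_def pair_exp_def
  by (simp add: sum_distrib_left of_int_sum mult.assoc)

lemma eval_linform_affine:
  assumes "finite S"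
  shows "eval_linform V m (\<lambda>v. of_int (b v) + (\<Sum>f\<in>S. c f * f v))
       = of_int (pair_exp V b m) + (\<Sum>f\<in>S. c f * eval_linform V m f)"
  unfolding eval_linform_def pair_exp_def
  by (simp add: distrib_right sum.distrib sum_distrib_right sum_distrib_left of_int_sum
      mult.assoc sum.swap[of _ S V])

definition sign_compatible ::
  "('c \<times> nat) set \<Rightarrow> ('c \<times> nat \<Rightarrow> int) \<Rightarrow> 'c linform set \<Rightarrow> ('c linform \<Rightarrow> int) \<Rightarrow> bool" where
  "sign_compatible V m FS \<epsilon> \<longleftrightarrow>
     (\<forall>f\<in>FS. eval_linform V m f \<noteq> 0 \<longrightarrow> of_int (\<epsilon> f) = sgn (eval_linform V m f))"

lemma sign_compatible_uminus:
  "sign_compatible V m FS \<epsilon> \<Longrightarrow> sign_compatible V (\<lambda>v. - m v) FS (\<lambda>f. - \<epsilon> f)"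
  unfolding sign_compatible_def eval_linform_uminus_point by (simp add: sgn_minus)

lemma good_sign_map_sign_compatible_exists:
  assumes "finite V" and nonzero: "\<And>f. f \<in> FS \<Longrightarrow> \<exists>w\<in>V. f w \<noteq> 0"
  shows "\<exists>\<epsilon>. good_sign_map FS \<epsilon> \<and> sign_compatible V m FS \<epsilon>"
proof -
  obtain vs where vs: "set vs = V" using finite_list[OF \<open>finite V\<close>] by blast
  define key where "key f = eval_linform V m f # map f vs" for f
  define \<epsilon> where "\<epsilon> f = first_nonzero_sign (key f)" for f
  have key_scale: "key (\<lambda>v. q * f v) = map ((*) q) (key f)" for q f
    by (simp add: key_def eval_linform_scale)
  have sign_scale: "of_int (\<epsilon> (\<lambda>v. q * f v)) = sgn q * of_int (\<epsilon> f)" for q f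
    unfolding \<epsilon>_def key_scale by (rule first_nonzero_sign_scale)
  have "\<epsilon> f \<in> {-1, 1}" if "f \<in> FS" for f
    unfolding \<epsilon>_def using nonzero[OF that] vs
    by (intro first_nonzero_sign_in) (auto simp: key_def)
  moreover have "\<epsilon> f1 = \<epsilon> f2" if equiv: "fd_equiv f1 f2" for f1 f2
  proof -
    obtain q :: rat where "q > 0" "f1 = (\<lambda>v. q * f2 v)"
      using equiv unfolding fd_equiv_def by auto
    then have "of_int (\<epsilon> f1) = (of_int (\<epsilon> f2) :: rat)" by (simp add: sign_scale)
    then show ?thesis by linarith
  qed
  moreover have "\<epsilon> f1 = - \<epsilon> f2" if equiv: "fd_equiv f1 (\<lambda>v. - f2 v)" for f1 f2
  proof -
    obtain q :: rat where "q > 0" "f1 = (\<lambda>v. (- q) * f2 v)"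
      using equiv unfolding fd_equiv_def by auto
    then have "of_int (\<epsilon> f1) = (of_int (- \<epsilon> f2) :: rat)"
      using sign_scale[of "- q" f2] by simp
    then show ?thesis by linarith
  qed
  moreover have "sign_compatible V m FS \<epsilon>"
    by (simp add: sign_compatible_def \<epsilon>_def key_def first_nonzero_sign_Cons)
  ultimately show ?thesis unfolding good_sign_map_def by blast
qed

lemma sum_fd_coeff_eq_sum_list:
  fixes g :: "'c linform \<Rightarrow> rat"
  shows "(\<Sum>f\<in>factor_degrees F. of_nat (fd_coeff F f) * g f)
       = sum_list (map (\<lambda>(P, a, n). of_nat n * g (factor_degree P a)) (snd (snd F)))"
proof -
  have "(\<Sum>f\<in>D. of_nat (sum_list (map (\<lambda>(P, a, n). if factor_degree P a = f then n else 0) fs))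
        * g f) = sum_list (map (\<lambda>(P, a, n). of_nat n * g (factor_degree P a)) fs)"
    if "finite D" "(\<lambda>(P, a, n). factor_degree P a) ` set fs \<subseteq> D" for D fs
    using that(2)
  proof (induction fs)
    case (Cons x fs)
    obtain P a n where x: "x = (P, a, n)" by (cases x)
    have "factor_degree P a \<in> D" using Cons.prems x by auto
    then have "(\<Sum>f\<in>D. of_nat (if factor_degree P a = f then n else 0) * g f)
        = of_nat n * g (factor_degree P a)"
      using \<open>finite D\<close>
      by (simp add: if_distrib[of of_nat] if_distrib[of "\<lambda>k. k * g _"] sum.delta cong: if_cong)
    then show ?case
      using Cons by (simp add: x distrib_right sum.distrib)
  qed simp
  then show ?thesis
    by (simp add: factor_degrees_def fd_coeff_def)
qed

lemma min_0_eq_if_sign: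
  fixes x :: rat
  assumes "x \<noteq> 0 \<Longrightarrow> of_int s = sgn x"
  shows "min 0 x = (if s = -1 then x else 0)"
  using assms by (cases x "0::rat" rule: linorder_cases) (auto simp: sgn_if)

lemma spec_valuation_eq_eval_generic_valuation:
  assumes F: "valid_factorization K Cs e F" and nz: "specialized_schur Cs e m F \<noteq> 0"
    and \<epsilon>: "sign_compatible (var_set Cs e) m (factor_degrees F) \<epsilon>"
  shows "of_int (spec_valuation Cs e m F) = eval_linform (var_set Cs e) m (generic_valuation F \<epsilon>)"
proof -
  obtain \<xi> b fs where F_eq: "F = (\<xi>, b, fs)" by (cases F)
  define V where "V = var_set Cs e"
  define FD where "FD = factor_degrees F"
  have "finite FD" by (simp add: FD_def factor_degrees_def)
  have "of_int (spec_valuation Cs e m F)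
      = of_int (pair_exp V b m)
        + sum_list (map (\<lambda>(P, a, n). of_nat n * min 0 (eval_linform V m (factor_degree P a))) fs)"
    using fls_subdegree_specialized_schur[OF F[unfolded F_eq] nz[unfolded F_eq]]
    by (simp add: spec_valuation_def F_eq V_def sum_list_of_int[symmetric]
        eval_linform_factor_degree of_int_min split_def o_def)
  also have "\<dots> = of_int (pair_exp V b m)
        + (\<Sum>f\<in>FD. of_nat (fd_coeff F f) * min 0 (eval_linform V m f))"
    by (simp add: FD_def sum_fd_coeff_eq_sum_list F_eq)
  also have "(\<Sum>f\<in>FD. of_nat (fd_coeff F f) * min 0 (eval_linform V m f))
      = (\<Sum>f\<in>{f\<in>FD. \<epsilon> f = -1}. of_nat (fd_coeff F f) * eval_linform V m f)"
    unfolding sum.inter_filter[OF \<open>finite FD\<close>]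
  proof (intro sum.cong refl)
    fix f assume "f \<in> FD"
    then have "min 0 (eval_linform V m f) = (if \<epsilon> f = -1 then eval_linform V m f else 0)"
      using \<epsilon> by (intro min_0_eq_if_sign) (simp add: sign_compatible_def FD_def V_def)
    then show "of_nat (fd_coeff F f) * min 0 (eval_linform V m f)
        = (if \<epsilon> f = -1 then of_nat (fd_coeff F f) * eval_linform V m f else 0)"
      by simp
  qed
  also have "of_int (pair_exp V b m) + \<dots> = eval_linform V m (generic_valuation F \<epsilon>)"
    unfolding generic_valuation_def using \<open>finite FD\<close>
    by (simp add: eval_linform_affine FD_def F_eq)
  finally show ?thesis by (simp add: V_def)
qed

lemma generic_valuation_uminus_sign: "generic_valuation F (\<lambda>f. - \<epsilon> f) = generic_degree F \<epsilon>"
  unfolding generic_valuation_def generic_degree_def by (simp add: minus_equation_iff)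

lemma spec_degree_eq_eval_generic_degree:
  assumes F: "valid_factorization K Cs e F" and nz: "specialized_schur Cs e m F \<noteq> 0"
    and \<epsilon>: "sign_compatible (var_set Cs e) m (factor_degrees F) \<epsilon>"
  shows "of_int (spec_degree Cs e m F) = eval_linform (var_set Cs e) m (generic_degree F \<epsilon>)"
proof -
  obtain \<xi> b fs where F_eq: "F = (\<xi>, b, fs)" by (cases F)
  have "specialized_schur Cs e (\<lambda>v. - m v) F \<noteq> 0"
    using specialized_schur_uminus_nonzero F nz by (simp add: F_eq)
  from spec_valuation_eq_eval_generic_valuation[OF F this sign_compatible_uminus[OF \<epsilon>]]
  show ?thesis
    by (simp add: spec_degree_def spec_valuation_def generic_valuation_uminus_sign
        eval_linform_uminus_point)
qed

lemma factor_degree_nonzero: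
  assumes F: "valid_factorization K Cs e F" and f: "f \<in> factor_degrees F"
  shows "\<exists>w\<in>var_set Cs e. f w \<noteq> 0"
proof -
  obtain \<xi> b fs where F_eq: "F = (\<xi>, b, fs)" by (cases F)
  from f obtain P a n where fs: "(P, a, n) \<in> set fs" and f_eq: "f = factor_degree P a"
    by (auto simp: factor_degrees_def F_eq)
  from F fs have "K_cyclotomic K P" and "Gcd (a ` var_set Cs e) = 1"
    by (auto simp: valid_factorization_def F_eq)
  then have "degree P > 0" and "\<not> a ` var_set Cs e \<subseteq> {0}"
    by (auto simp: K_cyclotomic_def simp flip: Gcd_0_iff)
  then show ?thesis by (auto simp: f_eq factor_degree_def)
qed

lemma finite_var_set: "finite Cs \<Longrightarrow> finite (var_set Cs e)"
  unfolding var_set_def by (rule finite_subset[of _ "Sigma Cs (\<lambda>C. {..<e C})"]) auto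

theorem proposition5p9:
  fixes K :: "complex set" and Cs :: "'c set" and e :: "'c \<Rightarrow> nat"
    and m :: "'c \<times> nat \<Rightarrow> int" and Fchi Fpsi :: "'c factorization"
  assumes K: "cyclotomic_number_field K"
    and Cs: "finite Cs" "\<forall>C\<in>Cs. e C \<ge> 2"
    and phi: "cyclotomic_specialization K Cs e m"
    and chi: "valid_factorization K Cs e Fchi"
    and psi: "valid_factorization K Cs e Fpsi"
    and nz_chi: "specialized_schur Cs e m Fchi \<noteq> 0"
    and nz_psi: "specialized_schur Cs e m Fpsi \<noteq> 0"
  shows "((\<forall>\<epsilon>. good_sign_map (factor_degrees Fchi \<union> factor_degrees Fpsi) \<epsilon> \<longrightarrow>
              generic_valuation Fchi \<epsilon> = generic_valuation Fpsi \<epsilon>)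
           \<longrightarrow> spec_valuation Cs e m Fchi = spec_valuation Cs e m Fpsi)
       \<and> ((\<forall>\<epsilon>. good_sign_map (factor_degrees Fchi \<union> factor_degrees Fpsi) \<epsilon> \<longrightarrow>
              generic_degree Fchi \<epsilon> = generic_degree Fpsi \<epsilon>)
           \<longrightarrow> spec_degree Cs e m Fchi = spec_degree Cs e m Fpsi)"
proof -
  let ?V = "var_set Cs e" and ?FS = "factor_degrees Fchi \<union> factor_degrees Fpsi"
  obtain \<epsilon> where good: "good_sign_map ?FS \<epsilon>" and compat: "sign_compatible ?V m ?FS \<epsilon>"
    using good_sign_map_sign_compatible_exists[OF finite_var_set[OF Cs(1)]]
      factor_degree_nonzero[OF chi] factor_degree_nonzero[OF psi] by blast
  have compat_chi: "sign_compatible ?V m (factor_degrees Fchi) \<epsilon>"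
    and compat_psi: "sign_compatible ?V m (factor_degrees Fpsi) \<epsilon>"
    using compat by (auto simp: sign_compatible_def)
  show ?thesis
  proof (intro conjI impI)
    assume "\<forall>\<epsilon>. good_sign_map ?FS \<epsilon> \<longrightarrow> generic_valuation Fchi \<epsilon> = generic_valuation Fpsi \<epsilon>"
    with good have "generic_valuation Fchi \<epsilon> = generic_valuation Fpsi \<epsilon>" by blast
    then have "(of_int (spec_valuation Cs e m Fchi) :: rat) = of_int (spec_valuation Cs e m Fpsi)"
      by (simp add: spec_valuation_eq_eval_generic_valuation[OF chi nz_chi compat_chi]
          spec_valuation_eq_eval_generic_valuation[OF psi nz_psi compat_psi])
    then show "spec_valuation Cs e m Fchi = spec_valuation Cs e m Fpsi" by simp
  next
    assume "\<forall>\<epsilon>. good_sign_map ?FS \<epsilon> \<longrightarrow> generic_degree Fchi \<epsilon> = generic_degree Fpsi \<epsilon>"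
    with good have "generic_degree Fchi \<epsilon> = generic_degree Fpsi \<epsilon>" by blast
    then have "(of_int (spec_degree Cs e m Fchi) :: rat) = of_int (spec_degree Cs e m Fpsi)"
      by (simp add: spec_degree_eq_eval_generic_degree[OF chi nz_chi compat_chi]
          spec_degree_eq_eval_generic_degree[OF psi nz_psi compat_psi])
    then show "spec_degree Cs e m Fchi = spec_degree Cs e m Fpsi" by simp
  qed
qed

end
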